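(* Every instance of $P_n\,|\,\mathrm{conc}, p_j=1\,|\,*$ in which the objective $*$ is a regular scheduling criterion has an optimal schedule $C$ with $C_{\max}=\max_j C_j\le tw\cdot\log n+1$, where $tw$ is the treewidth of the conflict graph and $n$ the number of jobs.
   Context: In $P_n\,|\,\mathrm{conc}, p_j=1\,|\,*$, jobs $\{1,\dots,n\}$ (possibly with due dates and weights) all have processing time $1$ and release time $0$; there is a conflict graph $G$ on the jobs, and a schedule $C:\{1,\dots,n\}\to\mathbb{N}_{\ge1}$ is feasible iff $C(i)\ne C(j)$ for every edge $\{i,j\}$ of $G$. An optimal schedule is a feasible schedule minimizing the objective. A scheduling criterion is regular if it is non-decreasing in the completion times of the jobs (decreasing a job's completion time never increases the objective value). $\log$ is base $2$. *)

theory Defs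
  imports Complex_Main
begin

definition simple_graph :: "'a set \<Rightarrow> 'a set set \<Rightarrow> bool" where
  "simple_graph V E \<longleftrightarrow> (\<forall>e\<in>E. \<exists>u v. e = {u, v} \<and> u \<noteq> v \<and> u \<in> V \<and> v \<in> V)"

definition connected_in :: "'a set set \<Rightarrow> 'a set \<Rightarrow> bool" where
  "connected_in E S \<longleftrightarrow>
     (\<forall>x\<in>S. \<forall>y\<in>S. (\<lambda>a b. {a, b} \<in> E \<and> a \<in> S \<and> b \<in> S)\<^sup>*\<^sup>* x y)"

definition is_tree :: "'a set \<Rightarrow> 'a set set \<Rightarrow> bool" where
  "is_tree I F \<longleftrightarrow> finite I \<and> I \<noteq> {} \<and> simple_graph I F \<and> connected_in F I
     \<and> card F = card I - 1"

definition tree_decomposition ::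
  "'a set \<Rightarrow> 'a set set \<Rightarrow> nat set \<Rightarrow> nat set set \<Rightarrow> (nat \<Rightarrow> 'a set) \<Rightarrow> bool" where
  "tree_decomposition V E I F B \<longleftrightarrow>
     is_tree I F
     \<and> (\<forall>i\<in>I. B i \<subseteq> V)
     \<and> (\<Union>i\<in>I. B i) = V
     \<and> (\<forall>e\<in>E. \<exists>i\<in>I. e \<subseteq> B i)
     \<and> (\<forall>v\<in>V. connected_in F {i\<in>I. v \<in> B i})"

definition decomposition_width :: "nat set \<Rightarrow> (nat \<Rightarrow> 'a set) \<Rightarrow> nat" where
  "decomposition_width I B = Max ((\<lambda>i. card (B i)) ` I) - 1"

definition treewidth :: "'a set \<Rightarrow> 'a set set \<Rightarrow> nat" where
  "treewidth V E = (LEAST k. \<exists>I F B. tree_decomposition V E I F B \<and> decomposition_width I B = k)"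

text \<open>Scheduling P_n | conc, p_j = 1 | *: jobs {1..n}, conflict graph edges E.\<close>

definition feasible_schedule :: "nat \<Rightarrow> nat set set \<Rightarrow> (nat \<Rightarrow> nat) \<Rightarrow> bool" where
  "feasible_schedule n E C \<longleftrightarrow>
     (\<forall>j\<in>{1..n}. C j \<ge> 1) \<and> (\<forall>i\<in>{1..n}. \<forall>j\<in>{1..n}. {i, j} \<in> E \<and> i \<noteq> j \<longrightarrow> C i \<noteq> C j)"

definition regular_criterion :: "nat \<Rightarrow> ((nat \<Rightarrow> nat) \<Rightarrow> real) \<Rightarrow> bool" where
  "regular_criterion n f \<longleftrightarrow> (\<forall>C C'. (\<forall>j\<in>{1..n}. C' j \<le> C j) \<longrightarrow> f C' \<le> f C)"

definition optimal_schedule :: "nat \<Rightarrow> nat set set \<Rightarrow> ((nat \<Rightarrow> nat) \<Rightarrow> real) \<Rightarrow> (nat \<Rightarrow> nat) \<Rightarrow> bool" where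
  "optimal_schedule n E f C \<longleftrightarrow>
     feasible_schedule n E C \<and> (\<forall>C'. feasible_schedule n E C' \<longrightarrow> f C \<le> f C')"

end

theory Submission
  imports Defs "HOL-Library.FuncSet"
begin

(* A graph with a tree decomposition of width k is k-degenerate: a leaf bag either contains
   a vertex that lies in no other bag, and whose neighbours therefore all lie in that bag, or
   it is contained in its neighbouring bag and can be dropped.  For a regular criterion some
   optimal schedule cannot move any job to an earlier free time slot, i.e. it is a Grundy
   colouring of the conflict graph.  In a Grundy colouring with largest colour t of a
   k-degenerate graph, let a_c be the number of vertices of colour at least c.  A vertex of
   colour d >= c has neighbours of every colour c, ..., d - 1, and a k-degenerate graph on
   a_c vertices has at most k (a_c - 1) edges, so a_(c+1) + ... + a_t <= k (a_c - 1).  This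
   forces n >= a_1 >= (1 + 1/k)^(t - 1), and (1 + 1/k)^k >= 2 gives t <= k log n + 1. *)

lemma connected_in_remove_leaf:
  assumes conn: "connected_in F X"
    and leaf: "\<forall>e\<in>F. i \<in> e \<longrightarrow> e = {i, j}" and "i \<noteq> j"
  shows "connected_in (F - {{i, j}}) (X - {i})"
  unfolding connected_in_def
proof (intro ballI)
  fix x y assume x: "x \<in> X - {i}" and y: "y \<in> X - {i}"
  let ?R = "\<lambda>a b. {a, b} \<in> F \<and> a \<in> X \<and> b \<in> X"
  let ?R' = "\<lambda>a b. {a, b} \<in> F - {{i, j}} \<and> a \<in> X - {i} \<and> b \<in> X - {i}"
  have "?R\<^sup>*\<^sup>* x y" using conn x y unfolding connected_in_def by blast
  \<comment> \<open>a path through the leaf i enters and leaves it via j\<close>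
  then have "(y \<noteq> i \<longrightarrow> ?R'\<^sup>*\<^sup>* x y) \<and> (y = i \<longrightarrow> ?R'\<^sup>*\<^sup>* x j)"
  proof (induction rule: rtranclp_induct)
    case base
    then show ?case using x by auto
  next
    case (step z w)
    consider "w = i" | "z = i" "w \<noteq> i" | "z \<noteq> i" "w \<noteq> i" by blast
    then show ?case
    proof cases
      case 1
      then have "{z, i} = {i, j}" using leaf step.hyps(2) by auto
      then show ?thesis using step 1 by (auto simp: doubleton_eq_iff)
    next
      case 2
      then have "{i, w} = {i, j}" using leaf step.hyps(2) by auto
      then show ?thesis using step 2 by (auto simp: doubleton_eq_iff)
    next
      case 3
      then have "?R' z w" using step.hyps(2) by (auto simp: doubleton_eq_iff)
      with 3 step.IH show ?thesis by (simp add: rtranclp.rtrancl_into_rtrancl)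
    qed
  qed
  then show "?R'\<^sup>*\<^sup>* x y" using y by auto
qed

lemma connected_in_leaf_singleton:
  assumes conn: "connected_in F X" and "i \<in> X" "j \<notin> X"
    and leaf: "\<forall>e\<in>F. i \<in> e \<longrightarrow> e = {i, j}"
  shows "X = {i}"
proof -
  have "y = i" if "y \<in> X" for y
  proof (rule ccontr)
    assume "y \<noteq> i"
    have "(\<lambda>a b. {a, b} \<in> F \<and> a \<in> X \<and> b \<in> X)\<^sup>*\<^sup>* i y"
      using conn \<open>i \<in> X\<close> \<open>y \<in> X\<close> unfolding connected_in_def by blast
    then obtain w where "{i, w} \<in> F" "w \<in> X"
      by (rule converse_rtranclpE) (use \<open>y \<noteq> i\<close> in auto)
    then show False
      using leaf \<open>i \<in> X\<close> \<open>j \<notin> X\<close> by (auto simp: doubleton_eq_iff)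
  qed
  then show ?thesis using \<open>i \<in> X\<close> by blast
qed

lemma finite_edges_simple_graph:
  assumes "simple_graph I F" and "finite I"
  shows "finite F"
proof -
  have "F \<subseteq> Pow I"
  proof
    fix e assume "e \<in> F"
    then obtain u v where "e = {u, v}" "u \<in> I" "v \<in> I"
      using assms(1) unfolding simple_graph_def by blast
    then show "e \<in> Pow I" by auto
  qed
  then show ?thesis using assms(2) by (simp add: finite_subset)
qed

lemma simple_graph_degree_sum:
  assumes "simple_graph I F" and "finite I"
  shows "(\<Sum>i\<in>I. card {e\<in>F. i \<in> e}) = 2 * card F"
proof (rule sum_multicount)
  show "finite F" using finite_edges_simple_graph[OF assms] .
  show "\<forall>e\<in>F. card {i\<in>I. i \<in> e} = 2"
  proof
    fix e assume "e \<in> F"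
    then obtain u v where "e = {u, v}" "u \<noteq> v" "u \<in> I" "v \<in> I"
      using assms(1) unfolding simple_graph_def by blast
    then have "{i\<in>I. i \<in> e} = {u, v}" by auto
    then show "card {i\<in>I. i \<in> e} = 2" using \<open>u \<noteq> v\<close> by simp
  qed
qed fact

lemma is_tree_has_leaf:
  assumes tree: "is_tree I F" and "2 \<le> card I"
  obtains i j where "i \<in> I" "j \<in> I" "i \<noteq> j" "{i, j} \<in> F" "\<forall>e\<in>F. i \<in> e \<longrightarrow> e = {i, j}"
proof -
  have fin: "finite I" and sg: "simple_graph I F" and conn: "connected_in F I"
    and card_F: "card F = card I - 1" using tree unfolding is_tree_def by auto
  have fin_F: "finite F" using finite_edges_simple_graph[OF sg fin] .
  have degree_pos: "0 < card {e\<in>F. i \<in> e}" if "i \<in> I" for i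
  proof -
    have "\<not> I \<subseteq> {i}" using card_mono[of "{i}" I] \<open>2 \<le> card I\<close> by auto
    then obtain y where "y \<in> I" "y \<noteq> i" by blast
    then have "(\<lambda>a b. {a, b} \<in> F \<and> a \<in> I \<and> b \<in> I)\<^sup>*\<^sup>* i y"
      using conn \<open>i \<in> I\<close> unfolding connected_in_def by blast
    then obtain w where "{i, w} \<in> F"
      by (rule converse_rtranclpE) (use \<open>y \<noteq> i\<close> in auto)
    then show ?thesis using fin_F by (auto simp: card_gt_0_iff)
  qed
  \<comment> \<open>degrees are positive and sum to 2 card I - 2\<close>
  have "\<exists>i\<in>I. card {e\<in>F. i \<in> e} = 1"
  proof (rule ccontr)
    assume no_leaf: "\<not> ?thesis"
    have "2 \<le> card {e\<in>F. i \<in> e}" if "i \<in> I" for i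
    proof -
      have "card {e\<in>F. i \<in> e} \<noteq> 1" using no_leaf that by blast
      with degree_pos[OF that] show ?thesis by linarith
    qed
    then have "(\<Sum>i\<in>I. 2) \<le> (\<Sum>i\<in>I. card {e\<in>F. i \<in> e})"
      by (rule sum_mono)
    then show False using simple_graph_degree_sum[OF sg fin] card_F \<open>2 \<le> card I\<close> by simp
  qed
  then obtain i where "i \<in> I" and "card {e\<in>F. i \<in> e} = 1" by blast
  then obtain e where e: "{e\<in>F. i \<in> e} = {e}" by (meson card_1_singletonE)
  then have "e \<in> F" "i \<in> e" and only_e: "\<forall>e'\<in>F. i \<in> e' \<longrightarrow> e' = e" by auto
  obtain u v where "e = {u, v}" "u \<noteq> v" "u \<in> I" "v \<in> I"
    using sg \<open>e \<in> F\<close> unfolding simple_graph_def by blast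
  with \<open>i \<in> e\<close> obtain j where "e = {i, j}" "j \<in> I" "i \<noteq> j" by auto
  with that \<open>i \<in> I\<close> \<open>e \<in> F\<close> only_e show ?thesis by blast
qed

lemma is_tree_remove_leaf:
  assumes tree: "is_tree I F" and "i \<in> I" "j \<in> I" "i \<noteq> j" "{i, j} \<in> F"
    and leaf: "\<forall>e\<in>F. i \<in> e \<longrightarrow> e = {i, j}"
  shows "is_tree (I - {i}) (F - {{i, j}})"
proof -
  have sg: "simple_graph I F" and conn: "connected_in F I" and card_F: "card F = card I - 1"
    using tree unfolding is_tree_def by auto
  have "simple_graph (I - {i}) (F - {{i, j}})"
    unfolding simple_graph_def
  proof
    fix e assume e: "e \<in> F - {{i, j}}"
    then obtain u v where "e = {u, v}" "u \<noteq> v" "u \<in> I" "v \<in> I"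
      using sg unfolding simple_graph_def by blast
    moreover have "i \<notin> e" using e leaf by auto
    ultimately show "\<exists>u v. e = {u, v} \<and> u \<noteq> v \<and> u \<in> I - {i} \<and> v \<in> I - {i}" by auto
  qed
  moreover have "connected_in (F - {{i, j}}) (I - {i})"
    using connected_in_remove_leaf[OF conn leaf \<open>i \<noteq> j\<close>] .
  moreover have "card (F - {{i, j}}) = card (I - {i}) - 1"
    using card_F assms(2-5) by (simp add: card_Diff_singleton)
  ultimately show ?thesis using tree assms(2-4) unfolding is_tree_def by auto
qed

definition conflicts :: "'a set set \<Rightarrow> 'a \<Rightarrow> 'a \<Rightarrow> bool" where
  "conflicts E u v \<longleftrightarrow> {u, v} \<in> E \<and> u \<noteq> v"

definition degenerate :: "'a set \<Rightarrow> ('a \<Rightarrow> 'a \<Rightarrow> bool) \<Rightarrow> nat \<Rightarrow> bool" where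
  "degenerate V adj k \<longleftrightarrow> (\<forall>S\<subseteq>V. S \<noteq> {} \<longrightarrow> (\<exists>v\<in>S. card {u\<in>S. adj v u} \<le> k))"

lemma tree_decomposition_remove_leaf:
  assumes td: "tree_decomposition V E I F B"
    and leaf: "i \<in> I" "j \<in> I" "i \<noteq> j" "{i, j} \<in> F" "\<forall>e\<in>F. i \<in> e \<longrightarrow> e = {i, j}"
    and "B i \<subseteq> B j"
  shows "tree_decomposition V E (I - {i}) (F - {{i, j}}) B"
proof -
  have tree: "is_tree I F" and bags: "\<forall>i\<in>I. B i \<subseteq> V" and cover: "(\<Union>i\<in>I. B i) = V"
    and edges: "\<forall>e\<in>E. \<exists>i\<in>I. e \<subseteq> B i" and conn: "\<forall>v\<in>V. connected_in F {i\<in>I. v \<in> B i}"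
    using td unfolding tree_decomposition_def by auto
  have "(\<Union>i'\<in>I - {i}. B i') = V"
    using cover leaf(2,3) \<open>B i \<subseteq> B j\<close> by auto
  moreover have "\<forall>e\<in>E. \<exists>i'\<in>I - {i}. e \<subseteq> B i'"
  proof
    fix e assume "e \<in> E"
    then obtain i' where "i' \<in> I" "e \<subseteq> B i'" using edges by blast
    then show "\<exists>i'\<in>I - {i}. e \<subseteq> B i'"
      using leaf(2,3) \<open>B i \<subseteq> B j\<close> by (cases "i' = i") auto
  qed
  moreover have "connected_in (F - {{i, j}}) {i'\<in>I - {i}. v \<in> B i'}" if "v \<in> V" for v
  proof -
    have "{i'\<in>I - {i}. v \<in> B i'} = {i'\<in>I. v \<in> B i'} - {i}" by auto
    then show ?thesis using connected_in_remove_leaf[OF _ leaf(5,3)] conn that by simp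
  qed
  ultimately show ?thesis
    using is_tree_remove_leaf[OF tree leaf] bags unfolding tree_decomposition_def by auto
qed

lemma tree_decomposition_min_degree:
  assumes "tree_decomposition V E I F B" and "finite V" and "V \<noteq> {}"
    and "\<forall>i\<in>I. card (B i) \<le> k + 1"
  shows "\<exists>v\<in>V. card {u\<in>V. conflicts E v u} \<le> k"
  using assms
proof (induction "card I" arbitrary: I F rule: less_induct)
  case less
  have tree: "is_tree I F" and bags: "\<forall>i\<in>I. B i \<subseteq> V" and cover: "(\<Union>i\<in>I. B i) = V"
    and edges: "\<forall>e\<in>E. \<exists>i\<in>I. e \<subseteq> B i" and conn: "\<forall>v\<in>V. connected_in F {i\<in>I. v \<in> B i}"
    using less.prems(1) unfolding tree_decomposition_def by auto
  \<comment> \<open>a vertex lying in a single bag has all its neighbours in that bag\<close>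
  have private_vertex: "card {u\<in>V. conflicts E v u} \<le> k"
    if "i \<in> I" "v \<in> B i" and only_i: "{i'\<in>I. v \<in> B i'} = {i}" for v i
  proof -
    have "{u\<in>V. conflicts E v u} \<subseteq> B i - {v}"
    proof
      fix u assume "u \<in> {u\<in>V. conflicts E v u}"
      then have "{v, u} \<in> E" "u \<noteq> v" unfolding conflicts_def by auto
      then obtain i' where "i' \<in> I" "v \<in> B i'" "u \<in> B i'" using edges by blast
      then have "i' = i" using only_i by blast
      with \<open>u \<in> B i'\<close> \<open>u \<noteq> v\<close> show "u \<in> B i - {v}" by simp
    qed
    moreover have "finite (B i)" using bags \<open>i \<in> I\<close> \<open>finite V\<close> by (meson finite_subset)
    ultimately have "card {u\<in>V. conflicts E v u} \<le> card (B i - {v})"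
      by (meson card_mono finite_Diff)
    also have "\<dots> = card (B i) - 1" using \<open>v \<in> B i\<close> by simp
    finally show ?thesis using less.prems(4) \<open>i \<in> I\<close> by fastforce
  qed
  have "finite I" "I \<noteq> {}" using tree unfolding is_tree_def by auto
  show ?case
  proof (cases "2 \<le> card I")
    case False
    with \<open>finite I\<close> \<open>I \<noteq> {}\<close> have "card I = 1"
      by (simp add: Suc_leI card_gt_0_iff le_antisym)
    then obtain i where "I = {i}" by (rule card_1_singletonE)
    moreover obtain v where "v \<in> V" using \<open>V \<noteq> {}\<close> by blast
    ultimately show ?thesis using private_vertex[of i v] cover by auto
  next
    case True
    then obtain i j where leaf: "i \<in> I" "j \<in> I" "i \<noteq> j" "{i, j} \<in> F"
      "\<forall>e\<in>F. i \<in> e \<longrightarrow> e = {i, j}"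
      using is_tree_has_leaf[OF tree] by blast
    show ?thesis
    proof (cases "B i \<subseteq> B j")
      case True
      have "card (I - {i}) < card I" using \<open>finite I\<close> \<open>i \<in> I\<close> by (rule card_Diff1_less)
      moreover have "\<forall>i'\<in>I - {i}. card (B i') \<le> k + 1" using less.prems(4) by blast
      ultimately show ?thesis
        using tree_decomposition_remove_leaf[OF less.prems(1) leaf True] less.prems(2,3)
        by (intro less.hyps)
    next
      case False
      then obtain v where "v \<in> B i" "v \<notin> B j" by blast
      moreover have "v \<in> V" using bags leaf(1) \<open>v \<in> B i\<close> by blast
      ultimately have "{i'\<in>I. v \<in> B i'} = {i}"
        using connected_in_leaf_singleton[OF _ _ _ leaf(5)] conn leaf(1) by simp
      with private_vertex[OF leaf(1) \<open>v \<in> B i\<close>] \<open>v \<in> V\<close> show ?thesis by blast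
    qed
  qed
qed

lemma tree_decomposition_induced:
  assumes "tree_decomposition V E I F B" and "S \<subseteq> V"
  shows "tree_decomposition S {e\<in>E. e \<subseteq> S} I F (\<lambda>i. B i \<inter> S)"
proof -
  have "{i\<in>I. v \<in> B i \<inter> S} = {i\<in>I. v \<in> B i}" if "v \<in> S" for v
    using that by blast
  then show ?thesis using assms unfolding tree_decomposition_def by auto
qed

lemma tree_decomposition_degenerate:
  assumes td: "tree_decomposition V E I F B" and "finite V"
    and "\<forall>i\<in>I. card (B i) \<le> k + 1"
  shows "degenerate V (conflicts E) k"
  unfolding degenerate_def
proof (intro allI impI)
  fix S assume "S \<subseteq> V" "S \<noteq> {}"
  have "finite S" using \<open>S \<subseteq> V\<close> \<open>finite V\<close> finite_subset by blast
  have "card (B i \<inter> S) \<le> k + 1" if "i \<in> I" for i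
  proof -
    have "finite (B i)" using td that \<open>finite V\<close> unfolding tree_decomposition_def
      by (meson finite_subset)
    then have "card (B i \<inter> S) \<le> card (B i)" by (intro card_mono) auto
    then show ?thesis using assms(3) that by fastforce
  qed
  then obtain v where "v \<in> S" and "card {u\<in>S. conflicts {e\<in>E. e \<subseteq> S} v u} \<le> k"
    using tree_decomposition_min_degree[OF tree_decomposition_induced[OF td \<open>S \<subseteq> V\<close>]
        \<open>finite S\<close> \<open>S \<noteq> {}\<close>] by blast
  moreover have "{u\<in>S. conflicts {e\<in>E. e \<subseteq> S} v u} = {u\<in>S. conflicts E v u}"
    using \<open>v \<in> S\<close> unfolding conflicts_def by auto
  ultimately show "\<exists>v\<in>S. card {u\<in>S. conflicts E v u} \<le> k" by auto
qed

lemma card_bag_le_decomposition_width: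
  assumes "finite I" and "i \<in> I"
  shows "card (B i) \<le> decomposition_width I B + 1"
proof -
  have "card (B i) \<le> Max ((\<lambda>i. card (B i)) ` I)" using assms by simp
  then show ?thesis unfolding decomposition_width_def by linarith
qed

lemma treewidth_attained:
  assumes "simple_graph V E"
  obtains I F B where "tree_decomposition V E I F B" "decomposition_width I B = treewidth V E"
proof -
  have "tree_decomposition V E {0} {} (\<lambda>_. V)"
    using assms unfolding tree_decomposition_def is_tree_def simple_graph_def connected_in_def
    by auto
  then have "\<exists>k I F B. tree_decomposition V E I F B \<and> decomposition_width I B = k" by blast
  from LeastI_ex[OF this] show ?thesis using that unfolding treewidth_def by blast
qed

text \<open>Unlike the usual notion, a Grundy colouring need not be proper here: the colour bound
  does not use properness.\<close>

definition grundy_colouring :: "'a set \<Rightarrow> ('a \<Rightarrow> 'a \<Rightarrow> bool) \<Rightarrow> ('a \<Rightarrow> nat) \<Rightarrow> bool" where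
  "grundy_colouring V adj col \<longleftrightarrow>
     (\<forall>x\<in>V. 1 \<le> col x \<and> (\<forall>c\<in>{1..<col x}. \<exists>y\<in>V. adj x y \<and> col y = c))"

lemma degenerate_sum_lower_neighbours:
  fixes col :: "'a \<Rightarrow> 'b::linorder"
  assumes deg: "degenerate V adj k" and "symp adj" and "finite V" and "S \<subseteq> V"
  shows "(\<Sum>x\<in>S. card {y\<in>S. adj x y \<and> col y < col x}) \<le> k * (card S - 1)"
  using \<open>S \<subseteq> V\<close>
proof (induction "card S" arbitrary: S rule: less_induct)
  case less
  let ?lower = "\<lambda>T x. card {y\<in>T. adj x y \<and> col y < col x}"
  have "finite S" using less.prems \<open>finite V\<close> finite_subset by blast
  show ?case
  proof (cases "card S \<le> 1")
    case True
    then have "?lower S x = 0" if "x \<in> S" for x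
      using that \<open>finite S\<close> by (auto simp: card_le_Suc0_iff_eq)
    then show ?thesis by simp
  next
    case False
    then have "S \<noteq> {}" by auto
    then obtain v where "v \<in> S" and low: "card {u\<in>S. adj v u} \<le> k"
      using deg less.prems unfolding degenerate_def by blast
    let ?S = "S - {v}"
    \<comment> \<open>removing v loses its lower neighbours and its upper neighbours' edges to it\<close>
    have split: "?lower S x = ?lower ?S x + (if adj x v \<and> col v < col x then 1 else 0)"
      if "x \<in> ?S" for x
    proof -
      have "{y\<in>S. adj x y \<and> col y < col x} =
          {y\<in>?S. adj x y \<and> col y < col x} \<union> (if adj x v \<and> col v < col x then {v} else {})"
        using \<open>v \<in> S\<close> by auto
      then show ?thesis using \<open>finite S\<close> by (auto simp: card_insert_if)
    qed
    have "(\<Sum>x\<in>S. ?lower S x) = ?lower S v + (\<Sum>x\<in>?S. ?lower S x)"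
      using \<open>v \<in> S\<close> \<open>finite S\<close> by (simp add: sum.remove)
    also have "\<dots> = (\<Sum>x\<in>?S. ?lower ?S x)
        + (?lower S v + card {x\<in>?S. adj x v \<and> col v < col x})"
      using split \<open>finite S\<close> by (simp add: sum.distrib sum.If_cases Int_def conj_commute set_diff_eq)
    also have "?lower S v + card {x\<in>?S. adj x v \<and> col v < col x}
        = card ({y\<in>S. adj v y \<and> col y < col v} \<union> {x\<in>?S. adj x v \<and> col v < col x})"
      using \<open>finite S\<close> by (intro card_Un_disjoint[symmetric]) auto
    also have "\<dots> \<le> card {u\<in>S. adj v u}"
      using \<open>finite S\<close> \<open>symp adj\<close> by (intro card_mono) (auto dest: sympD)
    also have "(\<Sum>x\<in>?S. ?lower ?S x) \<le> k * (card ?S - 1)"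
      using less.prems card_Diff1_less[OF \<open>finite S\<close> \<open>v \<in> S\<close>] by (intro less.hyps) auto
    finally have "(\<Sum>x\<in>S. ?lower S x) \<le> k * (card ?S - 1) + k"
      using low by simp
    also have "k * (card ?S - 1) + k = k * (card S - 1)"
    proof -
      have "card S - 1 = card ?S - 1 + 1"
        using False \<open>v \<in> S\<close> \<open>finite S\<close> by (simp add: card_Diff_singleton)
      then show ?thesis by (simp only: distrib_left mult_1_right)
    qed
    finally show ?thesis .
  qed
qed

lemma grundy_level_sum:
  assumes grundy: "grundy_colouring V adj col" and "degenerate V adj k" and "symp adj"
    and "finite V" and "1 \<le> c"
  shows "(\<Sum>j\<in>{c<..t}. card {y\<in>V. j \<le> col y}) \<le> k * (card {y\<in>V. c \<le> col y} - 1)"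
proof -
  define S where "S = {y\<in>V. c \<le> col y}"
  have "finite S" using \<open>finite V\<close> unfolding S_def by simp
  have "(\<Sum>j\<in>{c<..t}. card {y\<in>V. j \<le> col y}) = (\<Sum>j\<in>{c<..t}. card {y\<in>S. j \<le> col y})"
    unfolding S_def by (intro sum.cong refl arg_cong[where f = card]) auto
  also have "\<dots> = (\<Sum>y\<in>S. card {j\<in>{c<..t}. j \<le> col y})"
    using \<open>finite S\<close> by (intro sum_multicount_gen[symmetric]) auto
  also have "\<dots> \<le> (\<Sum>y\<in>S. col y - c)"
  proof (rule sum_mono)
    fix y
    have "card {j\<in>{c<..t}. j \<le> col y} \<le> card {c<..col y}" by (intro card_mono) auto
    then show "card {j\<in>{c<..t}. j \<le> col y} \<le> col y - c" by simp
  qed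
  \<comment> \<open>each y in S has neighbours in S of every colour c, ..., col y - 1\<close>
  also have "\<dots> \<le> (\<Sum>y\<in>S. card {z\<in>S. adj y z \<and> col z < col y})"
  proof (rule sum_mono)
    fix y assume "y \<in> S"
    have "{c..<col y} \<subseteq> col ` {z\<in>S. adj y z \<and> col z < col y}"
    proof
      fix d assume d: "d \<in> {c..<col y}"
      have "y \<in> V" using \<open>y \<in> S\<close> unfolding S_def by simp
      moreover have "d \<in> {1..<col y}" using d \<open>1 \<le> c\<close> by simp
      ultimately obtain z where "z \<in> V" "adj y z" "col z = d"
        using grundy unfolding grundy_colouring_def by blast
      with d have "z \<in> {z\<in>S. adj y z \<and> col z < col y}" unfolding S_def by simp
      with \<open>col z = d\<close> show "d \<in> col ` {z\<in>S. adj y z \<and> col z < col y}" by blast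
    qed
    then have "card {c..<col y} \<le> card (col ` {z\<in>S. adj y z \<and> col z < col y})"
      using \<open>finite S\<close> by (intro card_mono) auto
    also have "\<dots> \<le> card {z\<in>S. adj y z \<and> col z < col y}"
      using \<open>finite S\<close> by (intro card_image_le) auto
    finally show "col y - c \<le> card {z\<in>S. adj y z \<and> col z < col y}" by simp
  qed
  also have "\<dots> \<le> k * (card S - 1)"
    by (rule degenerate_sum_lower_neighbours[OF assms(2-4)]) (simp add: S_def)
  finally show ?thesis unfolding S_def .
qed

lemma sum_power_one_plus_inverse:
  fixes k :: real
  assumes "k > 0" and "c \<le> t"
  shows "(\<Sum>j\<in>{c<..t}. (1 + 1/k) ^ (t - j)) = k * ((1 + 1/k) ^ (t - c) - 1)"
  using \<open>c \<le> t\<close>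
proof (induction rule: inc_induct)
  case base
  then show ?case by simp
next
  case (step m)
  have "{m<..t} = insert (Suc m) {Suc m<..t}" using step.hyps by auto
  then have "(\<Sum>j\<in>{m<..t}. (1 + 1/k) ^ (t - j))
      = (1 + 1/k) ^ (t - Suc m) + k * ((1 + 1/k) ^ (t - Suc m) - 1)"
    using step.IH by simp
  also have "\<dots> = k * ((1 + 1/k) * (1 + 1/k) ^ (t - Suc m) - 1)"
    using \<open>k > 0\<close> by (simp add: field_simps)
  also have "(1 + 1/k) * (1 + 1/k) ^ (t - Suc m) = (1 + 1/k) ^ (t - m)"
    using step.hyps by (metis Suc_diff_Suc power_Suc)
  finally show ?case .
qed

text \<open>(1 + 1/k)^(t - c) solves the equations a_(c+1) + ... + a_t = k (a_c - 1).\<close>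

lemma geometric_growth_of_tail_sum_bound:
  fixes k :: real and a :: "nat \<Rightarrow> real"
  assumes "k > 0"
    and tail: "\<And>c. 1 \<le> c \<Longrightarrow> c \<le> t \<Longrightarrow> (\<Sum>j\<in>{c<..t}. a j) \<le> k * (a c - 1)"
    and "1 \<le> c" and "c \<le> t"
  shows "(1 + 1/k) ^ (t - c) \<le> a c"
  using \<open>1 \<le> c\<close> \<open>c \<le> t\<close>
proof (induction "t - c" arbitrary: c rule: less_induct)
  case less
  have "k * ((1 + 1/k) ^ (t - c) - 1) = (\<Sum>j\<in>{c<..t}. (1 + 1/k) ^ (t - j))"
    using sum_power_one_plus_inverse[OF \<open>k > 0\<close> \<open>c \<le> t\<close>] by simp
  also have "\<dots> \<le> (\<Sum>j\<in>{c<..t}. a j)"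
    using less by (intro sum_mono less.hyps) auto
  also have "\<dots> \<le> k * (a c - 1)" using tail less.prems .
  finally show ?case using \<open>k > 0\<close> by simp
qed

lemma exponent_le_mult_log:
  fixes k m :: nat and x :: real
  assumes "k > 0" and "(1 + 1 / real k) ^ m \<le> x"
  shows "real m \<le> real k * log 2 x"
proof -
  have "0 \<le> 1 / real k" by simp
  then have "1 + real k * (1 / real k) \<le> (1 + 1 / real k) ^ k"
    by (intro Bernoulli_inequality) linarith
  then have "2 \<le> (1 + 1 / real k) ^ k" using \<open>k > 0\<close> by simp
  then have "(2::real) ^ m \<le> ((1 + 1 / real k) ^ k) ^ m"
    by (rule power_mono) simp
  also have "\<dots> = ((1 + 1 / real k) ^ m) ^ k"
    by (simp flip: power_mult add: mult.commute)
  also have "\<dots> \<le> x ^ k"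
    using assms(2) by (intro power_mono) simp_all
  finally have "log 2 (2 ^ m) \<le> log 2 (x ^ k)"
    by (intro log_mono) simp_all
  moreover have "1 \<le> (1 + 1 / real k) ^ m" by (rule one_le_power) simp
  then have "0 < x" using assms(2) by linarith
  ultimately show ?thesis by (simp add: log_nat_power)
qed

theorem grundy_colouring_bound:
  assumes grundy: "grundy_colouring V adj col" and deg: "degenerate V adj k"
    and "symp adj" and "finite V" and "x \<in> V"
  shows "real (col x) \<le> real k * log 2 (card V) + 1"
proof -
  define t where "t = Max (col ` V)"
  define level where "level c = card {y\<in>V. c \<le> col y}" for c
  have "col x \<le> t" unfolding t_def using \<open>finite V\<close> \<open>x \<in> V\<close> by simp
  have "t \<in> col ` V" unfolding t_def using \<open>finite V\<close> \<open>x \<in> V\<close> by (intro Max_in) auto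
  then obtain top where "top \<in> V" "col top = t" by blast
  then have "1 \<le> t" using grundy unfolding grundy_colouring_def by auto
  have level_pos: "1 \<le> level c" if "c \<le> t" for c
  proof -
    have "{y\<in>V. c \<le> col y} \<noteq> {}" using \<open>top \<in> V\<close> \<open>col top = t\<close> that by blast
    then show ?thesis unfolding level_def using \<open>finite V\<close> by (simp add: Suc_le_eq card_gt_0_iff)
  qed
  have level_sum: "(\<Sum>j\<in>{c<..t}. level j) \<le> k * (level c - 1)" if "1 \<le> c" for c
    unfolding level_def using grundy_level_sum[OF grundy deg \<open>symp adj\<close> \<open>finite V\<close> that] .
  have "{y\<in>V. 1 \<le> col y} = V" using grundy unfolding grundy_colouring_def by blast
  then have "level 1 = card V" unfolding level_def by simp
  have "real (t - 1) \<le> real k * log 2 (card V)"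
  proof (cases "k = 0")
    case True
    have "t \<le> 1"
    proof (rule ccontr)
      assume "\<not> t \<le> 1"
      then have "level t \<le> (\<Sum>j\<in>{1<..t}. level j)" by (intro member_le_sum) auto
      then show False using level_sum[of 1] level_pos[of t] True by simp
    qed
    then show ?thesis using True by simp
  next
    case False
    have "(1 + 1 / real k) ^ (t - 1) \<le> real (level 1)"
    proof (rule geometric_growth_of_tail_sum_bound)
      fix c assume "1 \<le> c" "c \<le> t"
      have "real (\<Sum>j\<in>{c<..t}. level j) \<le> real (k * (level c - 1))"
        using level_sum[OF \<open>1 \<le> c\<close>] by linarith
      then show "(\<Sum>j\<in>{c<..t}. real (level j)) \<le> real k * (real (level c) - 1)"
        using level_pos[OF \<open>c \<le> t\<close>] by (simp add: of_nat_diff)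
    qed (use False \<open>1 \<le> t\<close> in auto)
    then show ?thesis using exponent_le_mult_log False \<open>level 1 = card V\<close> by simp
  qed
  then show ?thesis using \<open>col x \<le> t\<close> \<open>1 \<le> t\<close> by (simp add: of_nat_diff)
qed

lemma grundy_colouring_le_card:
  assumes "grundy_colouring V adj col" and "finite V" and "x \<in> V"
  shows "col x \<le> card V"
proof -
  have "{1..col x} \<subseteq> col ` V"
  proof
    fix c assume "c \<in> {1..col x}"
    then consider "c = col x" | "c \<in> {1..<col x}" by fastforce
    then show "c \<in> col ` V"
    proof cases
      case 2
      then obtain y where "y \<in> V" "col y = c"
        using assms(1,3) unfolding grundy_colouring_def by blast
      then show ?thesis by blast
    qed (use assms(3) in blast)
  qed
  then have "card {1..col x} \<le> card (col ` V)" using \<open>finite V\<close> by (intro card_mono) auto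
  also have "\<dots> \<le> card V" using \<open>finite V\<close> by (rule card_image_le)
  finally show ?thesis by simp
qed

lemma feasible_schedule_grundy_below:
  assumes "feasible_schedule n E C'"
  obtains C where "feasible_schedule n E C" "grundy_colouring {1..n} (conflicts E) C"
    "\<forall>j\<in>{1..n}. C j \<le> C' j"
proof -
  let ?below = "\<lambda>C. feasible_schedule n E C \<and> (\<forall>j\<in>{1..n}. C j \<le> C' j)"
  obtain C where "?below C" and least: "\<And>D. ?below D \<Longrightarrow> (\<Sum>j=1..n. C j) \<le> (\<Sum>j=1..n. D j)"
    using ex_has_least_nat[of ?below C' "\<lambda>C. \<Sum>j=1..n. C j"] assms by auto
  \<comment> \<open>otherwise some job could be moved to an earlier free slot, decreasing the total\<close>
  have "grundy_colouring {1..n} (conflicts E) C"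
    unfolding grundy_colouring_def
  proof (intro ballI conjI)
    fix j c assume j: "j \<in> {1..n}" and c: "c \<in> {1..<C j}"
    show "\<exists>u\<in>{1..n}. conflicts E j u \<and> C u = c"
    proof (rule ccontr)
      assume free: "\<not> ?thesis"
      have "c \<le> C' j" using \<open>?below C\<close> c j by fastforce
      then have "?below (C(j := c))"
        using \<open>?below C\<close> free c unfolding feasible_schedule_def conflicts_def
        by (auto simp: insert_commute)
      moreover have "(\<Sum>i=1..n. (C(j := c)) i) < (\<Sum>i=1..n. C i)"
        using j c by (intro sum_strict_mono_ex1) auto
      ultimately show False using least by fastforce
    qed
  next
    fix j assume "j \<in> {1..n}"
    then show "1 \<le> C j" using \<open>?below C\<close> unfolding feasible_schedule_def by blast
  qed
  then show ?thesis using that \<open>?below C\<close> by blast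
qed

lemma regular_criterion_cong:
  assumes "regular_criterion n f" and "\<forall>j\<in>{1..n}. C j = C' j"
  shows "f C = f C'"
  using assms unfolding regular_criterion_def by (metis order.antisym order.refl)

lemma exists_optimal_grundy_schedule:
  assumes regular: "regular_criterion n f"
  obtains C where "optimal_schedule n E f C" "grundy_colouring {1..n} (conflicts E) C"
proof -
  define Cand where "Cand = {C \<in> {1..n} \<rightarrow>\<^sub>E {1..n}.
    feasible_schedule n E C \<and> grundy_colouring {1..n} (conflicts E) C}"
  \<comment> \<open>f only sees the values on jobs, so restricting to {1..n} loses nothing\<close>
  have below: "\<exists>D\<in>Cand. f D \<le> f C'" if feasible: "feasible_schedule n E C'" for C'
  proof -
    obtain C where C: "feasible_schedule n E C" "grundy_colouring {1..n} (conflicts E) C"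
      "\<forall>j\<in>{1..n}. C j \<le> C' j"
      using feasible_schedule_grundy_below[OF feasible] by blast
    define D where "D = restrict C {1..n}"
    have "D \<in> Cand"
      using C grundy_colouring_le_card[OF C(2)]
      unfolding Cand_def D_def feasible_schedule_def grundy_colouring_def by auto
    moreover have "f D = f C" using regular_criterion_cong[OF regular] by (simp add: D_def)
    moreover have "f C \<le> f C'" using regular C(3) unfolding regular_criterion_def by blast
    ultimately show ?thesis by (intro bexI[of _ D]) simp_all
  qed
  define C where "C = arg_min_on f Cand"
  have "Cand \<subseteq> {1..n} \<rightarrow>\<^sub>E {1..n}" unfolding Cand_def by blast
  then have "finite Cand" by (rule finite_subset) (simp add: finite_PiE)
  moreover have "Cand \<noteq> {}"
    using below[of "\<lambda>j. j"] unfolding feasible_schedule_def by auto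
  ultimately have "C \<in> Cand" and min: "\<forall>D\<in>Cand. f C \<le> f D"
    using arg_min_if_finite[of Cand f] unfolding C_def by (auto simp: not_less)
  have "optimal_schedule n E f C"
    unfolding optimal_schedule_def
  proof (intro conjI allI impI)
    show "feasible_schedule n E C" using \<open>C \<in> Cand\<close> unfolding Cand_def by blast
    fix C' assume "feasible_schedule n E C'"
    then obtain D where "D \<in> Cand" "f D \<le> f C'" using below by blast
    then show "f C \<le> f C'" using min by fastforce
  qed
  moreover have "grundy_colouring {1..n} (conflicts E) C"
    using \<open>C \<in> Cand\<close> unfolding Cand_def by blast
  ultimately show ?thesis by (rule that)
qed

theorem corollary2:
  fixes n :: nat and E :: "nat set set" and f :: "(nat \<Rightarrow> nat) \<Rightarrow> real"
  assumes "simple_graph {1..n} E"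
    and "regular_criterion n f"
  shows "\<exists>C. optimal_schedule n E f C \<and>
           (\<forall>j\<in>{1..n}. real (C j) \<le> real (treewidth {1..n} E) * log 2 (real n) + 1)"
proof -
  obtain I F B where td: "tree_decomposition {1..n} E I F B"
    and width: "decomposition_width I B = treewidth {1..n} E"
    using treewidth_attained[OF assms(1)] .
  have "finite I" using td unfolding tree_decomposition_def is_tree_def by blast
  then have "\<forall>i\<in>I. card (B i) \<le> treewidth {1..n} E + 1"
    using card_bag_le_decomposition_width width by metis
  then have deg: "degenerate {1..n} (conflicts E) (treewidth {1..n} E)"
    using tree_decomposition_degenerate[OF td] by simp
  have sym: "symp (conflicts E)" unfolding symp_def conflicts_def by (auto simp: insert_commute)
  obtain C where "optimal_schedule n E f C" and grundy: "grundy_colouring {1..n} (conflicts E) C"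
    using exists_optimal_grundy_schedule[OF assms(2)] .
  moreover have "real (C j) \<le> real (treewidth {1..n} E) * log 2 (real n) + 1"
    if "j \<in> {1..n}" for j
    using grundy_colouring_bound[OF grundy deg sym _ that] by simp
  ultimately show ?thesis by blast
qed

end
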